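(* Let $\mathbf v\in\mathbb R^{n\times m}_{<0}$, $\mathbf b\in\mathbb R^n_{<0}$, and let $\mathbf z$ be a competitive allocation for $(\mathbf v,\mathbf b)$ with consumption graph $G=G_{\mathbf z}$ and $\mathbf u=\mathbf u(\mathbf z)$. For each chore $j$ let $n_j\ge1$ be the number of agents adjacent to $j$ in $G$, let $\bar{\mathbf z}$ be the allocation with $\bar z_{i,j}=1/n_j$ if $(i,j)\in G$ and $0$ otherwise, and $\bar u_i=u_i(\bar{\mathbf z}_i)$. Let $N^i$ be the set of agents in the connected component of $i$ in $G$, and for $i'\in N^i$ let $\pi_{i,i'}=\pi(\mathcal P)$ for any path $\mathcal P$ from $i$ to $i'$ in $G$ ($\pi_{i,i}=1$). Then for every agent $i$, $$u_i=\frac{b_i}{\sum_{i'\in N^i}b_{i'}}\sum_{i'\in N^i}\pi_{i,i'}\,\bar u_{i'}.$$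
   Context: Setup: agents $[n]$, chores $[m]$, allocations $\mathbf z\in\mathbb R^{n\times m}_{\ge0}$ with column sums $1$, $u_i(\mathbf z_i)=\sum_jv_{i,j}z_{i,j}$. Competitive allocation for budgets $\mathbf b$: there exist prices $\mathbf p\in\mathbb R^m_{<0}$ such that each $\mathbf z_i$ maximizes $u_i$ over bundles $\mathbf x\in\mathbb R^m_{\ge0}$ with $\sum_jp_jx_j\le b_i$. $G_{\mathbf z}$ has edge $(i,j)$ iff $z_{i,j}>0$. For a path $\mathcal P=(i_1,j_1,i_2,\dots,j_L,i_{L+1})$ alternating agents and chores, $\pi(\mathcal P)=\prod_{k=1}^L|v_{i_k,j_k}|/|v_{i_{k+1},j_k}|$ (for a competitive allocation this is path-independent within $G_{\mathbf z}$). *)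

theory Defs
  imports Complex_Main
begin

text \<open>Agents are 0..<n, chores are 0..<m. Valuations v i j, allocations z i j, prices p j.\<close>

definition utility :: "nat \<Rightarrow> (nat \<Rightarrow> nat \<Rightarrow> real) \<Rightarrow> nat \<Rightarrow> (nat \<Rightarrow> real) \<Rightarrow> real" where
  "utility m v i x = (\<Sum>j<m. v i j * x j)"

definition is_allocation :: "nat \<Rightarrow> nat \<Rightarrow> (nat \<Rightarrow> nat \<Rightarrow> real) \<Rightarrow> bool" where
  "is_allocation n m z \<longleftrightarrow>
     (\<forall>i<n. \<forall>j<m. z i j \<ge> 0) \<and> (\<forall>j<m. (\<Sum>i<n. z i j) = 1)"

definition competitive :: "nat \<Rightarrow> nat \<Rightarrow> (nat \<Rightarrow> nat \<Rightarrow> real) \<Rightarrow> (nat \<Rightarrow> real)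
    \<Rightarrow> (nat \<Rightarrow> nat \<Rightarrow> real) \<Rightarrow> bool" where
  "competitive n m v b z \<longleftrightarrow> is_allocation n m z \<and>
     (\<exists>p :: nat \<Rightarrow> real. (\<forall>j<m. p j < 0) \<and>
        (\<forall>i<n. (\<Sum>j<m. p j * z i j) \<le> b i \<and>
           (\<forall>x :: nat \<Rightarrow> real. (\<forall>j<m. x j \<ge> 0) \<longrightarrow> (\<Sum>j<m. p j * x j) \<le> b i
               \<longrightarrow> utility m v i x \<le> utility m v i (z i))))"

text \<open>A path (i_1, j_1, i_2, ..., j_L, i_{L+1}) in the consumption graph G_z, given by the
  agent list is = [i_1,...,i_{L+1}] and the chore list js = [j_1,...,j_L].\<close>
definition is_path :: "nat \<Rightarrow> nat \<Rightarrow> (nat \<Rightarrow> nat \<Rightarrow> real) \<Rightarrow> nat list \<Rightarrow> nat list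
    \<Rightarrow> nat \<Rightarrow> nat \<Rightarrow> bool" where
  "is_path n m z is js a a' \<longleftrightarrow>
     length is = Suc (length js) \<and> (\<forall>a\<in>set is. a < n) \<and> (\<forall>j\<in>set js. j < m) \<and>
     hd is = a \<and> last is = a' \<and>
     (\<forall>k<length js. z (is ! k) (js ! k) > 0 \<and> z (is ! Suc k) (js ! k) > 0)"

definition path_pi :: "(nat \<Rightarrow> nat \<Rightarrow> real) \<Rightarrow> nat list \<Rightarrow> nat list \<Rightarrow> real" where
  "path_pi v is js = (\<Prod>k<length js. \<bar>v (is ! k) (js ! k)\<bar> / \<bar>v (is ! Suc k) (js ! k)\<bar>)"

definition component :: "nat \<Rightarrow> nat \<Rightarrow> (nat \<Rightarrow> nat \<Rightarrow> real) \<Rightarrow> nat \<Rightarrow> nat set" where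
  "component n m z a = {a'. a' < n \<and> (\<exists>is js. is_path n m z is js a a')}"

definition deg_chore :: "nat \<Rightarrow> (nat \<Rightarrow> nat \<Rightarrow> real) \<Rightarrow> nat \<Rightarrow> nat" where
  "deg_chore n z j = card {i. i < n \<and> z i j > 0}"

definition zbar :: "nat \<Rightarrow> (nat \<Rightarrow> nat \<Rightarrow> real) \<Rightarrow> nat \<Rightarrow> nat \<Rightarrow> real" where
  "zbar n z i j = (if z i j > 0 then 1 / real (deg_chore n z j) else 0)"

end

theory Submission
  imports Defs
begin

text \<open>A competitive allocation has prices p < 0 and, for every agent a, a bang-per-buck
  ratio \<alpha> a > 0 with v a j = \<alpha> a * p j on the chores a consumes, and every agent spends
  exactly its budget. Hence u i = \<alpha> i * b i, the product along any path telescopes to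
  \<pi> i i' = \<alpha> i / \<alpha> i', and \<pi> i i' times the utility of agent i' under zbar equals
  \<alpha> i * (\<Sum>j. p j * zbar i' j). A chore consumed inside a component is consumed only
  there, so summing over the component turns zbar into z, and the right-hand side becomes
  \<alpha> i times the total budget of the component.\<close>

lemma optimal_bundle_proportional_prices:
  fixes p v x :: "nat \<Rightarrow> real" and B :: real
  assumes p_neg: "\<forall>j<m. p j < 0" and v_neg: "\<forall>j<m. v j < 0"
    and x_nonneg: "\<forall>j<m. x j \<ge> 0"
    and feasible: "(\<Sum>j<m. p j * x j) \<le> B" and B_neg: "B < 0"
    and optimal: "\<And>y. \<forall>j<m. y j \<ge> 0 \<Longrightarrow> (\<Sum>j<m. p j * y j) \<le> B
                     \<Longrightarrow> (\<Sum>j<m. v j * y j) \<le> (\<Sum>j<m. v j * x j)"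
  shows "\<exists>r>0. (\<forall>j<m. x j > 0 \<longrightarrow> v j = r * p j) \<and> (\<Sum>j<m. p j * x j) = B"
proof -
  define ratio where "ratio j = v j / p j" for j
  have "{..<m} \<noteq> {}"
    using feasible B_neg by auto
  then have "Min (ratio ` {..<m}) \<in> ratio ` {..<m}"
    by (intro Min_in) auto
  then obtain j0 where j0: "j0 < m" and "ratio j0 = Min (ratio ` {..<m})"
    by auto
  then have j0_min: "ratio j0 \<le> ratio j" if "j < m" for j
    using that by simp
  text \<open>Chore j0 gives the least disutility per unit of cost: spending the whole budget on
    it yields utility r * B, while r times the cost bounds the utility of every bundle.\<close>
  define r where "r = ratio j0"
  have r_pos: "r > 0"
    using j0 p_neg v_neg by (simp add: r_def ratio_def divide_neg_neg)
  define gap where "gap j = (r * p j - v j) * x j" for j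
  have gap_nonneg: "gap j \<ge> 0" if j: "j < m" for j
  proof -
    have "v j \<le> r * p j"
      using j0_min[OF j] p_neg j by (simp add: r_def ratio_def neg_le_divide_eq)
    then show ?thesis
      using x_nonneg j by (simp add: gap_def)
  qed
  have gap_sum: "(\<Sum>j<m. gap j) = r * (\<Sum>j<m. p j * x j) - (\<Sum>j<m. v j * x j)"
    by (simp add: gap_def sum_subtractf sum_distrib_left algebra_simps)
  define y where "y j = (if j = j0 then B / p j0 else 0)" for j
  have "p j0 \<noteq> 0"
    using j0 p_neg by force
  have "(\<Sum>j<m. p j * y j) = B" and "(\<Sum>j<m. v j * y j) = r * B"
    using j0 \<open>p j0 \<noteq> 0\<close> by (simp_all add: y_def r_def ratio_def if_distrib[of "(*) _"] cong: if_cong)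
  moreover have "\<forall>j<m. y j \<ge> 0"
    using j0 p_neg B_neg by (simp add: y_def divide_neg_neg less_imp_le)
  ultimately have "r * B \<le> (\<Sum>j<m. v j * x j)"
    using optimal[of y] by simp
  moreover have "r * (\<Sum>j<m. p j * x j) \<le> r * B"
    using feasible r_pos by simp
  moreover have "(\<Sum>j<m. gap j) \<ge> 0"
    using gap_nonneg by (intro sum_nonneg) simp
  ultimately have gap_zero: "(\<Sum>j<m. gap j) = 0" and "r * (\<Sum>j<m. p j * x j) = r * B"
    using gap_sum by linarith+
  then have spent: "(\<Sum>j<m. p j * x j) = B"
    using r_pos by simp
  from gap_zero have "\<forall>j<m. gap j = 0"
    using gap_nonneg sum_nonneg_eq_0_iff[of "{..<m}" gap] by simp
  then have "\<forall>j<m. x j > 0 \<longrightarrow> v j = r * p j"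
    by (auto simp: gap_def)
  with r_pos spent show ?thesis
    by blast
qed

lemma competitive_bang_per_buck:
  assumes v_neg: "\<forall>a<n. \<forall>j<m. v a j < 0" and b_neg: "\<forall>a<n. b a < 0"
    and comp: "competitive n m v b z"
  obtains p \<alpha> :: "nat \<Rightarrow> real"
  where "\<forall>j<m. p j < 0" and "\<forall>a<n. \<alpha> a > 0"
    and "\<And>a j. a < n \<Longrightarrow> j < m \<Longrightarrow> z a j > 0 \<Longrightarrow> v a j = \<alpha> a * p j"
    and "\<And>a. a < n \<Longrightarrow> (\<Sum>j<m. p j * z a j) = b a"
proof -
  obtain p where p_neg: "\<forall>j<m. p j < 0" and equilibrium: "\<forall>a<n. (\<Sum>j<m. p j * z a j) \<le> b a \<and>
      (\<forall>x. (\<forall>j<m. x j \<ge> 0) \<longrightarrow> (\<Sum>j<m. p j * x j) \<le> b a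
         \<longrightarrow> utility m v a x \<le> utility m v a (z a))"
    using comp unfolding competitive_def by blast
  have "\<forall>a<n. \<exists>r>0. (\<forall>j<m. z a j > 0 \<longrightarrow> v a j = r * p j) \<and> (\<Sum>j<m. p j * z a j) = b a"
  proof (intro allI impI)
    fix a assume a: "a < n"
    show "\<exists>r>0. (\<forall>j<m. z a j > 0 \<longrightarrow> v a j = r * p j) \<and> (\<Sum>j<m. p j * z a j) = b a"
      using comp equilibrium p_neg v_neg b_neg a
      by (intro optimal_bundle_proportional_prices)
        (auto simp: competitive_def is_allocation_def utility_def)
  qed
  then obtain \<alpha> where "\<forall>a<n. \<alpha> a > 0 \<and> (\<forall>j<m. z a j > 0 \<longrightarrow> v a j = \<alpha> a * p j)
      \<and> (\<Sum>j<m. p j * z a j) = b a"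
    by metis
  with p_neg show thesis
    by (intro that) auto
qed

lemma utility_eq_scaled_cost:
  assumes "\<And>j. j < m \<Longrightarrow> x j \<noteq> 0 \<Longrightarrow> v a j = c * p j"
  shows "utility m v a x = c * (\<Sum>j<m. p j * x j)"
  unfolding utility_def sum_distrib_left
  by (rule sum.cong) (use assms in \<open>fastforce+\<close>)

lemma is_path_snoc:
  assumes P: "is_path n m z as cs a a'" and "a'' < n" and "j < m"
    and "z a' j > 0" and "z a'' j > 0"
  shows "is_path n m z (as @ [a'']) (cs @ [j]) a a''"
proof -
  have len: "length as = Suc (length cs)" and "as \<noteq> []"
    using P unfolding is_path_def by auto
  then have "as ! length cs = a'"
    using P unfolding is_path_def by (simp add: last_conv_nth len)
  with P len assms(2-) \<open>as \<noteq> []\<close> show ?thesis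
    unfolding is_path_def by (auto simp: nth_append less_Suc_eq)
qed

lemma path_pi_eq_ratio:
  fixes \<alpha> p :: "nat \<Rightarrow> real"
  assumes P: "is_path n m z as cs a a'"
    and \<alpha>_pos: "\<forall>a<n. \<alpha> a > 0" and p_nonzero: "\<forall>j<m. p j \<noteq> 0"
    and proportional: "\<And>a j. a < n \<Longrightarrow> j < m \<Longrightarrow> z a j > 0 \<Longrightarrow> v a j = \<alpha> a * p j"
  shows "path_pi v as cs = \<alpha> a / \<alpha> a'"
proof -
  have len: "length as = Suc (length cs)" and "as \<noteq> []"
    and agents: "\<And>k. k \<le> length cs \<Longrightarrow> as ! k < n"
    and edges: "\<And>k. k < length cs \<Longrightarrow> cs ! k < m \<and> z (as ! k) (cs ! k) > 0 \<and> z (as ! Suc k) (cs ! k) > 0"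
    using P unfolding is_path_def by (auto simp: less_Suc_eq_le)
  have "\<bar>v (as ! k) (cs ! k)\<bar> / \<bar>v (as ! Suc k) (cs ! k)\<bar> = \<alpha> (as ! k) / \<alpha> (as ! Suc k)"
    if k: "k < length cs" for k
  proof -
    have "\<alpha> (as ! k) > 0" and "\<alpha> (as ! Suc k) > 0"
      using agents[of k] agents[of "Suc k"] k \<alpha>_pos by auto
    then show ?thesis
      using edges[OF k] agents[of k] agents[of "Suc k"] k p_nonzero
      by (simp add: proportional abs_mult)
  qed
  then have "path_pi v as cs = (\<Prod>k<length cs. \<alpha> (as ! k) / \<alpha> (as ! Suc k))"
    unfolding path_pi_def by simp
  also have "\<dots> = \<alpha> (as ! 0) / \<alpha> (as ! length cs)"
    using agents \<alpha>_pos by (intro prod_lessThan_telescope') (simp add: less_imp_neq[symmetric])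
  also have "\<dots> = \<alpha> a / \<alpha> a'"
    using P len \<open>as \<noteq> []\<close> unfolding is_path_def by (simp add: hd_conv_nth last_conv_nth)
  finally show ?thesis .
qed

lemma path_pi_mult_utility_zbar:
  fixes \<alpha> p :: "nat \<Rightarrow> real"
  assumes P: "is_path n m z as cs a a'" and "a' < n"
    and \<alpha>_pos: "\<forall>a<n. \<alpha> a > 0" and p_nonzero: "\<forall>j<m. p j \<noteq> 0"
    and proportional: "\<And>a j. a < n \<Longrightarrow> j < m \<Longrightarrow> z a j > 0 \<Longrightarrow> v a j = \<alpha> a * p j"
  shows "path_pi v as cs * utility m v a' (zbar n z a') = \<alpha> a * (\<Sum>j<m. p j * zbar n z a' j)"
proof -
  have "utility m v a' (zbar n z a') = \<alpha> a' * (\<Sum>j<m. p j * zbar n z a' j)"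
    using \<open>a' < n\<close> by (intro utility_eq_scaled_cost proportional) (auto simp: zbar_def split: if_splits)
  moreover have "\<alpha> a' \<noteq> 0"
    using \<open>a' < n\<close> \<alpha>_pos by force
  ultimately show ?thesis
    by (simp add: path_pi_eq_ratio[OF P \<alpha>_pos p_nonzero proportional])
qed

lemma component_subset: "component n m z a \<subseteq> {..<n}"
  unfolding component_def by auto

lemma finite_component: "finite (component n m z a)"
  using component_subset by (rule finite_subset) simp

lemma self_in_component:
  assumes "a < n"
  shows "a \<in> component n m z a"
proof -
  have "is_path n m z [a] [] a a"
    using assms by (simp add: is_path_def)
  with assms show ?thesis
    unfolding component_def by blast
qed

lemma component_share_chore:
  assumes "a' \<in> component n m z a" and "a'' < n" and "j < m"
    and "z a' j > 0" and "z a'' j > 0"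
  shows "a'' \<in> component n m z a"
  using assms is_path_snoc unfolding component_def by blast

lemma sum_zbar_consumers:
  assumes "\<exists>a<n. z a j > 0"
  shows "(\<Sum>a | a < n \<and> z a j > 0. zbar n z a j) = 1"
proof -
  have "{a. a < n \<and> z a j > 0} \<noteq> {}"
    using assms by blast
  then have "card {a. a < n \<and> z a j > 0} > 0"
    by (simp add: card_gt_0_iff)
  then show ?thesis
    using assms by (simp add: zbar_def deg_chore_def)
qed

text \<open>Either every consumer of chore j lies in the component or none does; accordingly both
  sides are 1 or 0.\<close>
lemma sum_zbar_component:
  assumes alloc: "is_allocation n m z" and j: "j < m"
  shows "(\<Sum>a\<in>component n m z i. zbar n z a j) = (\<Sum>a\<in>component n m z i. z a j)"
proof -
  define N where "N = component n m z i"
  define S where "S = {a. a < n \<and> z a j > 0}"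
  have N_sub: "N \<subseteq> {..<n}" and fin: "finite N"
    unfolding N_def by (rule component_subset finite_component)+
  have z_nonneg: "\<And>a. a < n \<Longrightarrow> z a j \<ge> 0"
    using alloc j unfolding is_allocation_def by blast
  show ?thesis
  proof (cases "N \<inter> S = {}")
    case True
    have "z a j = 0" if "a \<in> N" for a
    proof -
      have "a < n"
        using that N_sub by auto
      moreover have "a \<notin> S"
        using True that by blast
      ultimately show ?thesis
        using z_nonneg[of a] by (simp add: S_def)
    qed
    then show ?thesis
      by (simp add: N_def zbar_def)
  next
    case False
    then obtain a0 where "a0 \<in> N" and "a0 \<in> S"
      by blast
    have S_sub: "S \<subseteq> N"
    proof
      fix a assume "a \<in> S"
      with \<open>a0 \<in> N\<close> \<open>a0 \<in> S\<close> j show "a \<in> N"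
        unfolding N_def S_def by (blast intro: component_share_chore)
    qed
    have "(\<Sum>a\<in>N. zbar n z a j) = (\<Sum>a\<in>S. zbar n z a j)"
      using S_sub N_sub by (intro sum.mono_neutral_right fin) (auto simp: S_def zbar_def)
    also have "\<dots> = 1"
      using \<open>a0 \<in> S\<close> sum_zbar_consumers[of n z j] unfolding S_def by blast
    also have "\<dots> = (\<Sum>a<n. z a j)"
      using alloc j unfolding is_allocation_def by simp
    also have "\<dots> = (\<Sum>a\<in>S. z a j)"
      using z_nonneg by (intro sum.mono_neutral_right) (auto simp: S_def order_le_less)
    also have "\<dots> = (\<Sum>a\<in>N. z a j)"
      using S_sub N_sub z_nonneg by (intro sum.mono_neutral_left fin) (auto simp: S_def order_le_less)
    finally show ?thesis
      by (simp add: N_def)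
  qed
qed

lemma sum_cost_zbar_component:
  assumes alloc: "is_allocation n m z"
    and budget: "\<And>a. a < n \<Longrightarrow> (\<Sum>j<m. p j * z a j) = b a"
  shows "(\<Sum>a\<in>component n m z i. \<Sum>j<m. p j * zbar n z a j) = (\<Sum>a\<in>component n m z i. b a)"
proof -
  have "(\<Sum>a\<in>component n m z i. \<Sum>j<m. p j * zbar n z a j)
      = (\<Sum>j<m. p j * (\<Sum>a\<in>component n m z i. zbar n z a j))"
    by (simp add: sum_distrib_left sum.swap[of _ "component n m z i"])
  also have "\<dots> = (\<Sum>j<m. p j * (\<Sum>a\<in>component n m z i. z a j))"
    by (simp add: sum_zbar_component[OF alloc])
  also have "\<dots> = (\<Sum>a\<in>component n m z i. b a)"
    using component_subset[of n m z i]
    by (simp add: sum_distrib_left sum.swap[of _ "component n m z i"] budget subset_iff)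
  finally show ?thesis .
qed

theorem proposition4:
  fixes n m :: nat and v z :: "nat \<Rightarrow> nat \<Rightarrow> real" and b :: "nat \<Rightarrow> real"
    and i :: nat and pi :: "nat \<Rightarrow> real"
  assumes v_neg: "\<forall>i'<n. \<forall>j<m. v i' j < 0"
    and b_neg: "\<forall>i'<n. b i' < 0"
    and comp: "competitive n m v b z"
    and i: "i < n"
    and pi: "\<forall>i'\<in>component n m z i. \<exists>is js. is_path n m z is js i i' \<and> pi i' = path_pi v is js"
  shows "utility m v i (z i) =
           b i / (\<Sum>i'\<in>component n m z i. b i') *
           (\<Sum>i'\<in>component n m z i. pi i' * utility m v i' (zbar n z i'))"
proof -
  obtain p \<alpha> where p_neg: "\<forall>j<m. p j < 0" and \<alpha>_pos: "\<forall>a<n. \<alpha> a > 0"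
    and proportional: "\<And>a j. a < n \<Longrightarrow> j < m \<Longrightarrow> z a j > 0 \<Longrightarrow> v a j = \<alpha> a * p j"
    and budget: "\<And>a. a < n \<Longrightarrow> (\<Sum>j<m. p j * z a j) = b a"
    using competitive_bang_per_buck[OF v_neg b_neg comp] by blast
  have alloc: "is_allocation n m z"
    using comp unfolding competitive_def by blast
  define N where "N = component n m z i"
  have N_sub: "N \<subseteq> {..<n}" and fin: "finite N" and "i \<in> N"
    unfolding N_def by (rule component_subset finite_component self_in_component[OF i])+
  have utility_z: "utility m v i (z i) = \<alpha> i * b i"
  proof -
    have "\<forall>j<m. z i j \<ge> 0"
      using alloc i unfolding is_allocation_def by blast
    then have "utility m v i (z i) = \<alpha> i * (\<Sum>j<m. p j * z i j)"
      using i by (intro utility_eq_scaled_cost proportional) (auto simp: order_le_less)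
    with budget[OF i] show ?thesis
      by simp
  qed
  have p_nonzero: "\<forall>j<m. p j \<noteq> 0"
    using p_neg by force
  have "pi a * utility m v a (zbar n z a) = \<alpha> i * (\<Sum>j<m. p j * zbar n z a j)"
    if a: "a \<in> N" for a
  proof -
    obtain as cs where P: "is_path n m z as cs i a" and "pi a = path_pi v as cs"
      using pi a unfolding N_def by blast
    moreover have "a < n"
      using a N_sub by blast
    ultimately show ?thesis
      using path_pi_mult_utility_zbar[OF P _ \<alpha>_pos p_nonzero proportional] by simp
  qed
  then have "(\<Sum>a\<in>N. pi a * utility m v a (zbar n z a))
      = \<alpha> i * (\<Sum>a\<in>N. \<Sum>j<m. p j * zbar n z a j)"
    by (simp add: sum_distrib_left)
  also have "\<dots> = \<alpha> i * (\<Sum>a\<in>N. b a)"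
    unfolding N_def by (simp add: sum_cost_zbar_component[OF alloc budget])
  finally have "(\<Sum>a\<in>N. pi a * utility m v a (zbar n z a)) = \<alpha> i * (\<Sum>a\<in>N. b a)" .
  moreover have "(\<Sum>a\<in>N. b a) < 0"
    using sum_pos[OF fin, of "\<lambda>a. - b a"] \<open>i \<in> N\<close> N_sub b_neg by (force simp: sum_negf)
  ultimately show ?thesis
    using utility_z by (simp add: N_def)
qed

end
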